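(* Let $N\ge1$, $m>1$, $\alpha,\beta\in\mathbb R$ with $N+\alpha-m>0$ and $\beta-\alpha+1>0$; let $s_0\ge0$, $\lambda>0$ and $$m-1<\wp<m^*_{\alpha,\beta}-1,\qquad m^*_{\alpha,\beta}=\frac{m(N+\beta)}{N+\alpha-m}.$$ Then every positive solution $u$ of $$-(r^{N+\alpha-1}|u'(r)|^{m-2}u'(r))'=\lambda r^{N+\beta-1}u^{\wp}(r),\ r\in(s_0,\infty),\qquad u(s_0)=1,\quad u'(s_0)\le0,$$ satisfies $\lim_{r\to\infty}r^{N+\beta}u^{\wp+1}(r)=0$. In particular $\lim_{r\to\infty}u(r)=0$.
   Context: A positive solution is a positive function $u\in C^1$ on $[s_0,\infty)$ satisfying the differential equation on $(s_0,\infty)$ (with $r^{N+\alpha-1}|u'|^{m-2}u'$ of class $C^1$ there) together with the initial conditions. *)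

theory Defs
  imports "HOL-Analysis.Analysis"
begin

definition flux :: "nat \<Rightarrow> real \<Rightarrow> real \<Rightarrow> real \<Rightarrow> real \<Rightarrow> real" where
  "flux N \<alpha> m r v = r powr (real N + \<alpha> - 1) * (\<bar>v\<bar> powr (m - 2) * v)"

definition positive_solution ::
  "nat \<Rightarrow> real \<Rightarrow> real \<Rightarrow> real \<Rightarrow> real \<Rightarrow> real \<Rightarrow> real \<Rightarrow> (real \<Rightarrow> real) \<Rightarrow> bool" where
  "positive_solution N m \<alpha> \<beta> lam p s0 u \<longleftrightarrow>
     (\<forall>r\<ge>s0. u r > 0) \<and>
     (\<exists>u' w'.
        (\<forall>r\<ge>s0. (u has_real_derivative u' r) (at r within {s0..})) \<and>
        continuous_on {s0..} u' \<and>
        (\<forall>r>s0. ((\<lambda>t. flux N \<alpha> m t (u' t)) has_real_derivative w' r) (at r)) \<and>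
        continuous_on {s0<..} w' \<and>
        (\<forall>r>s0. - w' r = lam * r powr (real N + \<beta> - 1) * u r powr p) \<and>
        u s0 = 1 \<and> u' s0 \<le> 0)"

end

theory Submission
  imports Defs "HOL-Real_Asymp.Multiseries_Expansion"
begin

(* The flux w(r) = r^(N+alpha-1) |u'|^(m-2) u' has w' = -lam r^(N+beta-1) u^p < 0 and is
   continuous up to s0, where it is <= 0 because u'(s0) <= 0; hence w < 0, so u' < 0 and u
   decreases on (s0,oo). The mean value theorem for w on [r/2, r] then gives
   -w(r) >= K r^(N+beta) u(r)^p, i.e. -u' >= K' r^gamma u^q with q = p/(m-1) > 1 and
   gamma = (beta-alpha+1)/(m-1). Integrating (u^(1-q))' >= c r^gamma shows
   u(r) = O(r^(-theta)) with theta = (beta-alpha+m)/(p-m+1), and theta (p+1) > N+beta is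
   exactly the subcriticality p + 1 < m*. *)

lemma abs_powr_mult_self: "\<bar>v\<bar> powr c * v = sgn v * \<bar>v\<bar> powr (c + 1)" for v :: real
  by (cases "v = 0") (auto simp: powr_add sgn_if)

lemma tendsto_abs_powr_mult_self:
  fixes f :: "'a \<Rightarrow> real"
  assumes f: "(f \<longlongrightarrow> l) F" and c: "c > -1"
  shows "((\<lambda>x. \<bar>f x\<bar> powr c * f x) \<longlongrightarrow> \<bar>l\<bar> powr c * l) F"
proof (cases "l = 0")
  case True
  have norm_eq: "norm (\<bar>v\<bar> powr c * v) = \<bar>v\<bar> powr (1 + c)" for v :: real
  proof -
    have "norm (\<bar>v\<bar> powr c * v) = \<bar>v\<bar> * \<bar>v\<bar> powr c" by (simp add: abs_mult)
    also have "\<dots> = \<bar>v\<bar> powr (1 + c)" by (rule powr_mult_base) simp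
    finally show ?thesis .
  qed
  have "((\<lambda>x. \<bar>f x\<bar>) \<longlongrightarrow> 0) F" using f True by (simp add: tendsto_rabs_zero)
  then have "((\<lambda>x. norm (\<bar>f x\<bar> powr c * f x)) \<longlongrightarrow> 0) F"
    unfolding norm_eq by (rule tendsto_zero_powrI[OF _ tendsto_const]) (use c in auto)
  then show ?thesis using True by (simp add: tendsto_norm_zero_cancel)
next
  case False
  have "((\<lambda>x. \<bar>f x\<bar>) \<longlongrightarrow> \<bar>l\<bar>) F" using f by (rule tendsto_rabs)
  then have "((\<lambda>x. \<bar>f x\<bar> powr c) \<longlongrightarrow> \<bar>l\<bar> powr c) F"
    using False by (intro tendsto_powr'[OF _ tendsto_const]) auto
  then show ?thesis using f by (rule tendsto_mult)
qed

lemma flux_eq_sgn: "flux N \<alpha> m r v = sgn v * (r powr (real N + \<alpha> - 1) * \<bar>v\<bar> powr (m - 1))"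
  unfolding flux_def using abs_powr_mult_self[of v "m - 2"] by (simp add: algebra_simps)

lemma strict_decreasing_neg_if_right_limit_nonpos:
  fixes w :: "real \<Rightarrow> real"
  assumes decr: "\<And>x y. s < x \<Longrightarrow> x < y \<Longrightarrow> w y < w x"
    and lim: "(w \<longlongrightarrow> L) (at_right s)" and "L \<le> 0" and "s < t"
  shows "w t < 0"
proof -
  define t' where "t' = (s + t) / 2"
  have "s < t'" "t' < t" using \<open>s < t\<close> unfolding t'_def by auto
  have "\<forall>\<^sub>F x in at_right s. w t' \<le> w x"
    unfolding eventually_at_right_field
    using \<open>s < t'\<close> decr by (intro exI[of _ t']) (auto intro: less_imp_le)
  then have "w t' \<le> L" using tendsto_lowerbound[OF lim] by simp
  then show ?thesis using decr[OF \<open>s < t'\<close> \<open>t' < t\<close>] \<open>L \<le> 0\<close> by linarith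
qed

lemma powr_ge_min_half_powr:
  fixes r z b :: real
  assumes "0 < r" "r / 2 \<le> z" "z \<le> r"
  shows "min 1 ((1 / 2) powr b) * r powr b \<le> z powr b"
proof -
  have "z powr b = (z / r) powr b * r powr b" using assms by (simp add: powr_divide)
  moreover have "min 1 ((1 / 2) powr b) \<le> (z / r) powr b"
  proof (cases "b \<ge> 0")
    case True
    then have "(1 / 2) powr b \<le> (z / r) powr b" using assms by (intro powr_mono2) (auto simp: field_simps)
    then show ?thesis by linarith
  next
    case False
    then have "1 powr b \<le> (z / r) powr b" using assms by (intro powr_mono2') (auto simp: field_simps)
    then show ?thesis by simp
  qed
  ultimately show ?thesis by (simp add: mult_right_mono)
qed

lemma deriv_ge_powr_imp_ge:
  fixes f f' :: "real \<Rightarrow> real"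
  assumes "0 < R" "c + 1 \<noteq> 0" "R \<le> r"
    and deriv: "\<And>x. R \<le> x \<Longrightarrow> (f has_real_derivative f' x) (at x)"
    and bound: "\<And>x. R \<le> x \<Longrightarrow> K * x powr c \<le> f' x"
  shows "f R + K / (c + 1) * (r powr (c + 1) - R powr (c + 1)) \<le> f r"
proof -
  define g where "g x = f x - K / (c + 1) * x powr (c + 1)" for x
  have "g R \<le> g r"
  proof (rule DERIV_nonneg_imp_nondecreasing[OF \<open>R \<le> r\<close>])
    fix x assume "R \<le> x" "x \<le> r"
    then have "(g has_real_derivative f' x - K * x powr c) (at x)"
      unfolding g_def using \<open>0 < R\<close> \<open>c + 1 \<noteq> 0\<close> deriv
      by (auto intro!: derivative_eq_intros)
    then show "\<exists>y. (g has_real_derivative y) (at x) \<and> 0 \<le> y"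
      using bound[OF \<open>R \<le> x\<close>] by auto
  qed
  then show ?thesis unfolding g_def by (simp add: algebra_simps)
qed

lemma powr_decay_of_deriv_ineq:
  fixes u u' :: "real \<Rightarrow> real"
  assumes "1 < q" "0 < c + 1" "0 < K" "0 < R"
    and pos: "\<And>r. R \<le> r \<Longrightarrow> 0 < u r"
    and deriv: "\<And>r. R \<le> r \<Longrightarrow> (u has_real_derivative u' r) (at r)"
    and ineq: "\<And>r. R \<le> r \<Longrightarrow> K * r powr c * u r powr q \<le> - u' r"
  shows "\<exists>D. \<forall>\<^sub>F r in at_top. u r \<le> D * r powr (- ((c + 1) / (q - 1)))"
proof -
  define f where "f r = u r powr (1 - q)" for r
  define C where "C = (q - 1) * K / (c + 1)"
  have "0 < C" unfolding C_def using assms(1-3) by simp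
  have f_deriv: "(f has_real_derivative (q - 1) * u r powr (- q) * (- u' r)) (at r)"
    if "R \<le> r" for r
    unfolding f_def using deriv[OF that] pos[OF that]
    by (auto intro!: derivative_eq_intros simp: algebra_simps)
  have f_deriv_ge: "(q - 1) * K * r powr c \<le> (q - 1) * u r powr (- q) * (- u' r)"
    if "R \<le> r" for r
  proof -
    have "(q - 1) * K * r powr c = (q - 1) * u r powr (- q) * (K * r powr c * u r powr q)"
      using pos[OF that] by (simp add: powr_minus field_simps)
    also have "\<dots> \<le> (q - 1) * u r powr (- q) * (- u' r)"
      using ineq[OF that] \<open>1 < q\<close> by (intro mult_left_mono) auto
    finally show ?thesis .
  qed
  have f_ge: "C * (r powr (c + 1) - R powr (c + 1)) \<le> f r" if "R \<le> r" for r
  proof -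
    have "f R + C * (r powr (c + 1) - R powr (c + 1)) \<le> f r"
      using deriv_ge_powr_imp_ge[OF \<open>0 < R\<close> _ that f_deriv f_deriv_ge] \<open>0 < c + 1\<close>
      unfolding C_def by simp
    moreover have "0 \<le> f R" unfolding f_def by simp
    ultimately show ?thesis by linarith
  qed
  have "\<forall>\<^sub>F r in at_top. 2 * R powr (c + 1) \<le> r powr (c + 1)"
    using real_powr_at_top[OF \<open>0 < c + 1\<close>] by (simp add: filterlim_at_top)
  then have "\<forall>\<^sub>F r in at_top. u r \<le> (C / 2) powr (- 1 / (q - 1)) * r powr (- ((c + 1) / (q - 1)))"
    using eventually_ge_at_top[of R]
  proof eventually_elim
    case (elim r)
    then have "0 < r" using \<open>0 < R\<close> by linarith
    have "C * (r powr (c + 1) / 2) \<le> C * (r powr (c + 1) - R powr (c + 1))"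
      using elim(1) \<open>0 < C\<close> by (intro mult_left_mono) auto
    then have "C / 2 * r powr (c + 1) \<le> f r" using f_ge[OF \<open>R \<le> r\<close>] by simp
    have "(1 - q) * (- 1 / (q - 1)) = 1" using \<open>1 < q\<close> by (simp add: field_simps)
    then have "u r = f r powr (- 1 / (q - 1))"
      unfolding f_def using pos[OF \<open>R \<le> r\<close>] by (simp add: powr_powr)
    also have "\<dots> \<le> (C / 2 * r powr (c + 1)) powr (- 1 / (q - 1))"
      using \<open>C / 2 * r powr (c + 1) \<le> f r\<close> \<open>0 < C\<close> \<open>0 < r\<close> \<open>1 < q\<close>
      by (intro powr_mono2') auto
    also have "\<dots> = (C / 2) powr (- 1 / (q - 1)) * (r powr (c + 1)) powr (- 1 / (q - 1))"
      by (rule powr_mult)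
    also have "\<dots> = (C / 2) powr (- 1 / (q - 1)) * r powr (- ((c + 1) / (q - 1)))"
      by (simp add: powr_powr)
    finally show ?case .
  qed
  then show ?thesis by blast
qed

lemma powr_weighted_le:
  fixes r x D \<theta> a q :: real
  assumes "0 < r" "0 \<le> x" "x \<le> D * r powr (- \<theta>)" "0 \<le> q"
  shows "r powr a * x powr q \<le> D powr q * r powr (a - \<theta> * q)"
proof -
  have "x powr q \<le> (D * r powr (- \<theta>)) powr q" using assms by (intro powr_mono2) auto
  also have "\<dots> = D powr q * r powr (- \<theta> * q)" by (simp add: powr_mult powr_powr)
  finally have "r powr a * x powr q \<le> r powr a * (D powr q * r powr (- \<theta> * q))"
    by (intro mult_left_mono) auto
  also have "\<dots> = D powr q * r powr (a - \<theta> * q)"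
    using \<open>0 < r\<close> by (simp add: powr_diff powr_minus divide_inverse)
  finally show ?thesis .
qed

lemma tendsto_zero_if_le_powr:
  fixes g :: "real \<Rightarrow> real"
  assumes "\<forall>\<^sub>F r in at_top. 0 \<le> g r" "\<forall>\<^sub>F r in at_top. g r \<le> D * r powr e" "e < 0"
  shows "(g \<longlongrightarrow> 0) at_top"
proof (rule tendsto_sandwich[OF assms(1,2) tendsto_const])
  show "((\<lambda>r. D * r powr e) \<longlongrightarrow> 0) at_top"
    using tendsto_mult_right_zero[OF tendsto_neg_powr[OF \<open>e < 0\<close> filterlim_ident]] by simp
qed

locale positive_radial_solution =
  fixes N :: nat and m \<alpha> \<beta> lam p s0 :: real and u u' w' :: "real \<Rightarrow> real"
  assumes m_gt_1: "1 < m" and flux_exponent_pos: "0 < real N + \<alpha> - 1"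
    and s0_nonneg: "0 \<le> s0" and lam_pos: "0 < lam" and p_nonneg: "0 \<le> p"
    and u_pos: "\<And>r. s0 \<le> r \<Longrightarrow> 0 < u r"
    and u_deriv: "\<And>r. s0 \<le> r \<Longrightarrow> (u has_real_derivative u' r) (at r within {s0..})"
    and u'_cont: "continuous_on {s0..} u'"
    and flux_deriv:
      "\<And>r. s0 < r \<Longrightarrow> ((\<lambda>t. flux N \<alpha> m t (u' t)) has_real_derivative w' r) (at r)"
    and equation: "\<And>r. s0 < r \<Longrightarrow> - w' r = lam * r powr (real N + \<beta> - 1) * u r powr p"
    and u'_s0_nonpos: "u' s0 \<le> 0"
begin

abbreviation w :: "real \<Rightarrow> real" where "w t \<equiv> flux N \<alpha> m t (u' t)"

lemma u_has_derivative_at: "s0 < r \<Longrightarrow> (u has_real_derivative u' r) (at r)"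
  using u_deriv[of r] at_within_interior[of r "{s0..}"] by simp

lemma flux_strict_decreasing:
  assumes "s0 < x" "x < y"
  shows "w y < w x"
proof (rule DERIV_neg_imp_decreasing[OF \<open>x < y\<close>])
  fix z assume "x \<le> z"
  then have "s0 < z" using \<open>s0 < x\<close> by linarith
  have "0 < lam * z powr (real N + \<beta> - 1) * u z powr p"
    using lam_pos u_pos[of z] \<open>s0 < z\<close> s0_nonneg by simp
  then show "\<exists>d. (w has_real_derivative d) (at z) \<and> d < 0"
    using flux_deriv[OF \<open>s0 < z\<close>] equation[OF \<open>s0 < z\<close>] by (intro exI[of _ "w' z"]) auto
qed

lemma flux_tendsto_at_right: "(w \<longlongrightarrow> flux N \<alpha> m s0 (u' s0)) (at_right s0)"
proof -
  have "\<forall>\<^sub>F t in at_right s0. 0 \<le> t"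
    using s0_nonneg eventually_at_right_less[of s0] by (auto elim: eventually_mono)
  then have "((\<lambda>t. t powr (real N + \<alpha> - 1)) \<longlongrightarrow> s0 powr (real N + \<alpha> - 1)) (at_right s0)"
    using flux_exponent_pos by (intro tendsto_powr' tendsto_ident_at tendsto_const) auto
  moreover have "(u' \<longlongrightarrow> u' s0) (at s0 within {s0..})"
    using u'_cont unfolding continuous_on_def by auto
  then have "(u' \<longlongrightarrow> u' s0) (at_right s0)"
    by (rule tendsto_within_subset) auto
  then have "((\<lambda>t. \<bar>u' t\<bar> powr (m - 2) * u' t) \<longlongrightarrow> \<bar>u' s0\<bar> powr (m - 2) * u' s0)
      (at_right s0)"
    by (rule tendsto_abs_powr_mult_self) (use m_gt_1 in simp)
  ultimately show ?thesis unfolding flux_def by (rule tendsto_mult)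
qed

lemma flux_neg: "s0 < r \<Longrightarrow> w r < 0"
proof (rule strict_decreasing_neg_if_right_limit_nonpos
    [OF flux_strict_decreasing flux_tendsto_at_right])
  show "flux N \<alpha> m s0 (u' s0) \<le> 0"
    using u'_s0_nonpos unfolding flux_eq_sgn by (simp add: mult_nonpos_nonneg)
qed

lemma deriv_neg:
  assumes "s0 < r"
  shows "u' r < 0"
proof (rule ccontr)
  assume "\<not> u' r < 0"
  then have "0 \<le> w r" by (simp add: flux_eq_sgn sgn_if)
  then show False using flux_neg[OF \<open>s0 < r\<close>] by linarith
qed

lemma u_antimono:
  assumes "s0 < x" "x \<le> y"
  shows "u y \<le> u x"
proof (rule DERIV_nonpos_imp_nonincreasing[OF \<open>x \<le> y\<close>])
  fix z assume "x \<le> z"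
  then have "s0 < z" using \<open>s0 < x\<close> by linarith
  then show "\<exists>d. (u has_real_derivative d) (at z) \<and> d \<le> 0"
    using u_has_derivative_at deriv_neg less_imp_le by blast
qed

lemma flux_lower_bound:
  "\<exists>K>0. \<forall>r>2 * s0. K * r powr (real N + \<beta>) * u r powr p \<le> - w r"
proof -
  define b where "b = real N + \<beta> - 1"
  define K where "K = lam * min 1 ((1 / 2) powr b) / 2"
  have "K * r powr (real N + \<beta>) * u r powr p \<le> - w r" if "2 * s0 < r" for r
  proof -
    have "0 < r" "s0 < r / 2" "r / 2 < r" using that s0_nonneg by auto
    obtain z where z: "r / 2 < z" "z < r" and mvt: "w r - w (r / 2) = (r - r / 2) * w' z"
      using MVT2[OF \<open>r / 2 < r\<close>, of w w'] flux_deriv \<open>s0 < r / 2\<close> by force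
    have "s0 < z" using z \<open>s0 < r / 2\<close> by linarith
    have "r powr (real N + \<beta>) = r powr b * r"
      using \<open>0 < r\<close> powr_add[of r b 1] unfolding b_def by simp
    then have "K * r powr (real N + \<beta>) * u r powr p
        = r / 2 * lam * (min 1 ((1 / 2) powr b) * r powr b) * u r powr p"
      unfolding K_def by simp
    also have "\<dots> \<le> r / 2 * lam * z powr b * u z powr p"
      using powr_ge_min_half_powr[of r z b] u_antimono[of z r] u_pos[of r] z \<open>0 < r\<close>
        \<open>s0 < z\<close> lam_pos p_nonneg
      by (intro mult_mono mult_left_mono powr_mono2) auto
    also have "\<dots> = (r - r / 2) * (- w' z)" using equation[OF \<open>s0 < z\<close>] unfolding b_def by simp
    also have "\<dots> \<le> - w r" using mvt flux_neg[OF \<open>s0 < r / 2\<close>] by linarith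
    finally show ?thesis .
  qed
  moreover have "0 < K" unfolding K_def using lam_pos by simp
  ultimately show ?thesis by blast
qed

lemma deriv_lower_bound:
  "\<exists>K>0. \<forall>r>2 * s0.
     K * r powr ((\<beta> - \<alpha> + 1) / (m - 1)) * u r powr (p / (m - 1)) \<le> - u' r"
proof -
  obtain K where "0 < K" and K: "\<forall>r>2 * s0. K * r powr (real N + \<beta>) * u r powr p \<le> - w r"
    using flux_lower_bound by blast
  define e where "e = 1 / (m - 1)"
  have "0 < e" unfolding e_def using m_gt_1 by simp
  have "K powr e * r powr ((\<beta> - \<alpha> + 1) * e) * u r powr (p * e) \<le> - u' r"
    if "2 * s0 < r" for r
  proof -
    have "0 < r" "s0 < r" using that s0_nonneg by auto
    have "r powr (real N + \<alpha> - 1) * (K * r powr (\<beta> - \<alpha> + 1) * u r powr p)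
        = K * r powr (real N + \<beta>) * u r powr p"
      by (simp add: powr_add[symmetric])
    also have "\<dots> \<le> - w r" using K that by blast
    also have "\<dots> = r powr (real N + \<alpha> - 1) * (- u' r) powr (m - 1)"
      using deriv_neg[OF \<open>s0 < r\<close>] by (simp add: flux_eq_sgn)
    finally have "K * r powr (\<beta> - \<alpha> + 1) * u r powr p \<le> (- u' r) powr (m - 1)"
      using \<open>0 < r\<close> by simp
    then have "(K * r powr (\<beta> - \<alpha> + 1) * u r powr p) powr e \<le> ((- u' r) powr (m - 1)) powr e"
      using \<open>0 < K\<close> \<open>0 < e\<close> by (intro powr_mono2) auto
    then show ?thesis
      using \<open>0 < K\<close> deriv_neg[OF \<open>s0 < r\<close>] m_gt_1
      by (simp add: powr_mult powr_powr e_def)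
  qed
  then show ?thesis
    using \<open>0 < K\<close> by (intro exI[of _ "K powr e"]) (auto simp: e_def)
qed

lemma u_powr_decay:
  assumes "m - 1 < p" and "0 < \<beta> - \<alpha> + m"
  shows "\<exists>D. \<forall>\<^sub>F r in at_top. u r \<le> D * r powr (- ((\<beta> - \<alpha> + m) / (p - m + 1)))"
proof -
  obtain K where "0 < K" and K: "\<forall>r>2 * s0.
      K * r powr ((\<beta> - \<alpha> + 1) / (m - 1)) * u r powr (p / (m - 1)) \<le> - u' r"
    using deriv_lower_bound by blast
  have "(\<beta> - \<alpha> + 1) / (m - 1) + 1 = (\<beta> - \<alpha> + m) / (m - 1)"
    and "p / (m - 1) - 1 = (p - m + 1) / (m - 1)"
    using m_gt_1 by (simp_all add: field_simps)
  then have exponent_eq: "((\<beta> - \<alpha> + 1) / (m - 1) + 1) / (p / (m - 1) - 1)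
      = (\<beta> - \<alpha> + m) / (p - m + 1)"
    using m_gt_1 by simp
  show ?thesis unfolding exponent_eq[symmetric]
  proof (rule powr_decay_of_deriv_ineq[OF _ _ \<open>0 < K\<close>, where R = "2 * s0 + 1" and u' = u'])
    show "1 < p / (m - 1)" "0 < (\<beta> - \<alpha> + 1) / (m - 1) + 1"
      using assms m_gt_1 by (simp_all add: field_simps)
  qed (use K s0_nonneg u_pos u_has_derivative_at in auto)
qed

end

lemma subcritical_exponent_neg:
  fixes N :: nat and m \<alpha> \<beta> p :: real
  assumes "0 < real N + \<alpha> - m" "m - 1 < p" "p < m * (real N + \<beta>) / (real N + \<alpha> - m) - 1"
  shows "real N + \<beta> - (\<beta> - \<alpha> + m) / (p - m + 1) * (p + 1) < 0"
proof -
  have "(p + 1) * (real N + \<alpha> - m) < m * (real N + \<beta>)"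
    using assms(1,3) by (simp add: less_divide_eq algebra_simps)
  then have "(real N + \<beta>) * (p - m + 1) < (\<beta> - \<alpha> + m) * (p + 1)"
    by (simp add: algebra_simps)
  then show ?thesis using assms(2) by (simp add: field_simps)
qed

theorem corollary3p1:
  fixes N :: nat and m \<alpha> \<beta> s0 lam p :: real and u :: "real \<Rightarrow> real"
  assumes "N \<ge> 1" and "m > 1"
    and "real N + \<alpha> - m > 0" and "\<beta> - \<alpha> + 1 > 0"
    and "s0 \<ge> 0" and "lam > 0"
    and "m - 1 < p"
    and "p < m * (real N + \<beta>) / (real N + \<alpha> - m) - 1"
    and "positive_solution N m \<alpha> \<beta> lam p s0 u"
  shows "((\<lambda>r. r powr (real N + \<beta>) * u r powr (p + 1)) \<longlongrightarrow> 0) at_top \<and>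
         (u \<longlongrightarrow> 0) at_top"
proof -
  have "0 < real N + \<alpha> - 1" "0 \<le> p" using assms(2,3,7) by linarith+
  then obtain u' w' where "positive_radial_solution N m \<alpha> \<beta> lam p s0 u u' w'"
    using assms(2,5,6,9) unfolding positive_solution_def positive_radial_solution_def by blast
  then interpret positive_radial_solution N m \<alpha> \<beta> lam p s0 u u' w' .
  define \<theta> where "\<theta> = (\<beta> - \<alpha> + m) / (p - m + 1)"
  have "0 < \<beta> - \<alpha> + m" using assms(2,4) by linarith
  then obtain D where bound: "\<forall>\<^sub>F r in at_top. u r \<le> D * r powr (- \<theta>)"
    using u_powr_decay[OF \<open>m - 1 < p\<close>] unfolding \<theta>_def by blast
  have u_nonneg: "\<forall>\<^sub>F r in at_top. 0 \<le> u r"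
    using eventually_ge_at_top[of s0] by eventually_elim (simp add: u_pos less_imp_le)
  have "\<forall>\<^sub>F r in at_top.
      r powr (real N + \<beta>) * u r powr (p + 1)
        \<le> D powr (p + 1) * r powr (real N + \<beta> - \<theta> * (p + 1))"
    using bound u_nonneg eventually_gt_at_top[of 0]
    by eventually_elim (use p_nonneg in \<open>auto intro: powr_weighted_le\<close>)
  moreover have "real N + \<beta> - \<theta> * (p + 1) < 0"
    using subcritical_exponent_neg assms unfolding \<theta>_def by blast
  moreover have "0 < \<theta>" unfolding \<theta>_def using assms by simp
  ultimately show ?thesis
    using bound u_nonneg by (auto intro!: tendsto_zero_if_le_powr)
qed

end
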